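(* Let $\nabla$ be a metric connection on an anchored metric bundle $(E,\langle\cdot,\cdot\rangle,a_E)$ over $M$, and let $\circ^\nabla$ be the bracket $\langle e_1\circ^\nabla e_2,e_3\rangle=\langle\nabla_{e_1}e_2,e_3\rangle-\langle\nabla_{e_2}e_1,e_3\rangle+\langle\nabla_{e_3}e_1,e_2\rangle$. Then $(E,\langle\cdot,\cdot\rangle,\circ^\nabla,a_E)$ is a pre-Courant algebroid if and only if either of the following equivalent conditions holds: (1) for all $e_1,e_2\in\Gamma(E)$ the operator $C^\nabla(e_1,e_2):\Gamma(E)\to\Gamma(E)$ is $C^\infty(M)$-linear; (2) $\mathcal{D}(f)\circ^\nabla e=0$ for all $e\in\Gamma(E)$ and $f\in C^\infty(M)$.
   Context: An anchored metric bundle: a vector bundle $E\to M$ with pseudo-metric $\langle\cdot,\cdot\rangle$ and bundle map $a_E:E\to TM$. A metric connection: $\mathbb{R}$-bilinear $\nabla$ with $\nabla_{fe_1}e_2=f\nabla_{e_1}e_2$, $\nabla_{e_1}(fe_2)=a_E(e_1)(f)e_2+f\nabla_{e_1}e_2$, $a_E(e_1)\langle e_2,e_3\rangle=\langle\nabla_{e_1}e_2,e_3\rangle+\langle e_2,\nabla_{e_1}e_3\rangle$. $\mathcal{D}:C^\infty(M)\to\Gamma(E)$ is defined by $\langle\mathcal{D}(f),e\rangle=a_E(e)(f)$. The Courant curvature is $C^\nabla(e_1,e_2)=\nabla_{e_1}\nabla_{e_2}-\nabla_{e_2}\nabla_{e_1}-\nabla_{e_1\circ^\nabla e_2}$. $(E,\langle\cdot,\cdot\rangle,\circ^\nabla,a_E)$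 is always a metric algebroid (i.e. $a_E(e)\langle h_1,h_2\rangle=\langle e\circ h_1,h_2\rangle+\langle h_1,e\circ h_2\rangle$ and $e\circ e=\tfrac12\mathcal{D}\langle e,e\rangle$); a pre-Courant algebroid is a metric algebroid with $a_E(e_1\circ e_2)=[a_E(e_1),a_E(e_2)]$ for all $e_1,e_2$. *)

theory Defs
  imports Main "HOL.Real_Vector_Spaces"
begin

text \<open>Smooth functions C^infinity(M) are modelled by a set Cinf of real-valued
functions on M (type 'm) closed under the pointwise algebra operations; smooth sections
Gamma(E) are modelled by a real vector space 'e with a C^infinity(M)-action sm.
The pseudo-metric is g, the anchor is anc (anc e is the vector field a_E(e),
acting on functions as a derivation), and all operations are pointwise.\<close>

definition fun_algebra :: "('m \<Rightarrow> real) set \<Rightarrow> bool" where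
  "fun_algebra Cinf \<longleftrightarrow>
     (\<forall>c. (\<lambda>x. c) \<in> Cinf) \<and>
     (\<forall>f\<in>Cinf. \<forall>h\<in>Cinf. (\<lambda>x. f x + h x) \<in> Cinf) \<and>
     (\<forall>f\<in>Cinf. \<forall>h\<in>Cinf. (\<lambda>x. f x * h x) \<in> Cinf) \<and>
     (\<forall>f\<in>Cinf. (\<lambda>x. - f x) \<in> Cinf)"

definition anchored_metric_bundle ::
  "('m \<Rightarrow> real) set \<Rightarrow> (('m \<Rightarrow> real) \<Rightarrow> 'e::real_vector \<Rightarrow> 'e) \<Rightarrow>
   ('e \<Rightarrow> 'e \<Rightarrow> ('m \<Rightarrow> real)) \<Rightarrow> ('e \<Rightarrow> ('m \<Rightarrow> real) \<Rightarrow> ('m \<Rightarrow> real)) \<Rightarrow> bool" where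
  "anchored_metric_bundle Cinf sm g anc \<longleftrightarrow>
     fun_algebra Cinf \<and>
     \<comment> \<open>Gamma(E) is a C^infinity(M)-module, compatible with its real structure\<close>
     (\<forall>f\<in>Cinf. \<forall>h\<in>Cinf. \<forall>e. sm (\<lambda>x. f x * h x) e = sm f (sm h e)) \<and>
     (\<forall>f\<in>Cinf. \<forall>h\<in>Cinf. \<forall>e. sm (\<lambda>x. f x + h x) e = sm f e + sm h e) \<and>
     (\<forall>f\<in>Cinf. \<forall>e e'. sm f (e + e') = sm f e + sm f e') \<and>
     (\<forall>c e. sm (\<lambda>x. c) e = c *\<^sub>R e) \<and>
     \<comment> \<open>pseudo-metric: symmetric, C^infinity(M)-bilinear, nondegenerate\<close>
     (\<forall>e h. g e h \<in> Cinf) \<and>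
     (\<forall>e h. g e h = g h e) \<and>
     (\<forall>e e' h. g (e + e') h = (\<lambda>x. g e h x + g e' h x)) \<and>
     (\<forall>f\<in>Cinf. \<forall>e h. g (sm f e) h = (\<lambda>x. f x * g e h x)) \<and>
     (\<forall>e. (\<forall>h. g e h = (\<lambda>x. 0)) \<longrightarrow> e = 0) \<and>
     \<comment> \<open>anchor: a_E(e) is a vector field (an R-linear derivation of C^infinity(M))\<close>
     (\<forall>e. \<forall>f\<in>Cinf. anc e f \<in> Cinf) \<and>
     (\<forall>e. \<forall>f\<in>Cinf. \<forall>h\<in>Cinf. anc e (\<lambda>x. f x + h x) = (\<lambda>x. anc e f x + anc e h x)) \<and>
     (\<forall>e. \<forall>f\<in>Cinf. \<forall>c. anc e (\<lambda>x. c * f x) = (\<lambda>x. c * anc e f x)) \<and>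
     (\<forall>e. \<forall>f\<in>Cinf. \<forall>h\<in>Cinf.
        anc e (\<lambda>x. f x * h x) = (\<lambda>x. f x * anc e h x + anc e f x * h x)) \<and>
     \<comment> \<open>anchor is a bundle map, i.e. C^infinity(M)-linear in e\<close>
     (\<forall>e e'. \<forall>f\<in>Cinf. anc (e + e') f = (\<lambda>x. anc e f x + anc e' f x)) \<and>
     (\<forall>h\<in>Cinf. \<forall>e. \<forall>f\<in>Cinf. anc (sm h e) f = (\<lambda>x. h x * anc e f x))"

definition metric_connection ::
  "('m \<Rightarrow> real) set \<Rightarrow> (('m \<Rightarrow> real) \<Rightarrow> 'e::real_vector \<Rightarrow> 'e) \<Rightarrow>
   ('e \<Rightarrow> 'e \<Rightarrow> ('m \<Rightarrow> real)) \<Rightarrow> ('e \<Rightarrow> ('m \<Rightarrow> real) \<Rightarrow> ('m \<Rightarrow> real)) \<Rightarrow>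
   ('e \<Rightarrow> 'e \<Rightarrow> 'e) \<Rightarrow> bool" where
  "metric_connection Cinf sm g anc nab \<longleftrightarrow>
     (\<forall>e1 e1' e2. nab (e1 + e1') e2 = nab e1 e2 + nab e1' e2) \<and>
     (\<forall>e1 e2 e2'. nab e1 (e2 + e2') = nab e1 e2 + nab e1 e2') \<and>
     (\<forall>c e1 e2. nab (c *\<^sub>R e1) e2 = c *\<^sub>R nab e1 e2) \<and>
     (\<forall>c e1 e2. nab e1 (c *\<^sub>R e2) = c *\<^sub>R nab e1 e2) \<and>
     (\<forall>f\<in>Cinf. \<forall>e1 e2. nab (sm f e1) e2 = sm f (nab e1 e2)) \<and>
     (\<forall>f\<in>Cinf. \<forall>e1 e2. nab e1 (sm f e2) = sm (anc e1 f) e2 + sm f (nab e1 e2)) \<and>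
     (\<forall>e1 e2 e3. anc e1 (g e2 e3) = (\<lambda>x. g (nab e1 e2) e3 x + g e2 (nab e1 e3) x))"

definition is_D ::
  "('m \<Rightarrow> real) set \<Rightarrow> ('e \<Rightarrow> 'e \<Rightarrow> ('m \<Rightarrow> real)) \<Rightarrow>
   ('e \<Rightarrow> ('m \<Rightarrow> real) \<Rightarrow> ('m \<Rightarrow> real)) \<Rightarrow> (('m \<Rightarrow> real) \<Rightarrow> 'e) \<Rightarrow> bool" where
  "is_D Cinf g anc D \<longleftrightarrow> (\<forall>f\<in>Cinf. \<forall>e. g (D f) e = anc e f)"

definition is_nabla_bracket ::
  "('e \<Rightarrow> 'e \<Rightarrow> ('m \<Rightarrow> real)) \<Rightarrow> ('e \<Rightarrow> 'e \<Rightarrow> 'e) \<Rightarrow> ('e \<Rightarrow> 'e \<Rightarrow> 'e) \<Rightarrow> bool" where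
  "is_nabla_bracket g nab circ \<longleftrightarrow>
     (\<forall>e1 e2 e3. g (circ e1 e2) e3 =
        (\<lambda>x. g (nab e1 e2) e3 x - g (nab e2 e1) e3 x + g (nab e3 e1) e2 x))"

definition courant_curvature ::
  "('e::real_vector \<Rightarrow> 'e \<Rightarrow> 'e) \<Rightarrow> ('e \<Rightarrow> 'e \<Rightarrow> 'e) \<Rightarrow> 'e \<Rightarrow> 'e \<Rightarrow> 'e \<Rightarrow> 'e" where
  "courant_curvature nab circ e1 e2 e3 =
     nab e1 (nab e2 e3) - nab e2 (nab e1 e3) - nab (circ e1 e2) e3"

definition Cinf_linear ::
  "('m \<Rightarrow> real) set \<Rightarrow> (('m \<Rightarrow> real) \<Rightarrow> 'e::real_vector \<Rightarrow> 'e) \<Rightarrow> ('e \<Rightarrow> 'e) \<Rightarrow> bool" where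
  "Cinf_linear Cinf sm T \<longleftrightarrow>
     (\<forall>e e'. T (e + e') = T e + T e') \<and> (\<forall>f\<in>Cinf. \<forall>e. T (sm f e) = sm f (T e))"

definition metric_algebroid ::
  "('m \<Rightarrow> real) set \<Rightarrow> ('e::real_vector \<Rightarrow> 'e \<Rightarrow> ('m \<Rightarrow> real)) \<Rightarrow> ('e \<Rightarrow> 'e \<Rightarrow> 'e) \<Rightarrow>
   ('e \<Rightarrow> ('m \<Rightarrow> real) \<Rightarrow> ('m \<Rightarrow> real)) \<Rightarrow> (('m \<Rightarrow> real) \<Rightarrow> 'e) \<Rightarrow> bool" where
  "metric_algebroid Cinf g circ anc D \<longleftrightarrow>
     (\<forall>e h1 h2. anc e (g h1 h2) = (\<lambda>x. g (circ e h1) h2 x + g h1 (circ e h2) x)) \<and>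
     (\<forall>e. circ e e = (1/2) *\<^sub>R D (g e e))"

definition pre_courant_algebroid ::
  "('m \<Rightarrow> real) set \<Rightarrow> ('e::real_vector \<Rightarrow> 'e \<Rightarrow> ('m \<Rightarrow> real)) \<Rightarrow> ('e \<Rightarrow> 'e \<Rightarrow> 'e) \<Rightarrow>
   ('e \<Rightarrow> ('m \<Rightarrow> real) \<Rightarrow> ('m \<Rightarrow> real)) \<Rightarrow> (('m \<Rightarrow> real) \<Rightarrow> 'e) \<Rightarrow> bool" where
  "pre_courant_algebroid Cinf g circ anc D \<longleftrightarrow>
     metric_algebroid Cinf g circ anc D \<and>
     (\<forall>e1 e2. \<forall>f\<in>Cinf. anc (circ e1 e2) f =
        (\<lambda>x. anc e1 (anc e2 f) x - anc e2 (anc e1 f) x))"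

end

theory Submission
  imports Defs
begin

text \<open>Since \<open>\<circ>\<^sup>\<nabla>\<close> is always a metric algebroid, being pre-Courant only asks that the anchor
  defect \<open>\<Phi>(e\<^sub>1,e\<^sub>2)f = [a e\<^sub>1, a e\<^sub>2]f - a(e\<^sub>1 \<circ> e\<^sub>2)f\<close> vanish. Expanding the Leibniz rule of
  \<open>\<nabla>\<close> twice gives \<open>C\<^sup>\<nabla>(e\<^sub>1,e\<^sub>2)(f e) = f C\<^sup>\<nabla>(e\<^sub>1,e\<^sub>2)e + \<Phi>(e\<^sub>1,e\<^sub>2)f \<cdot> e\<close>, and metric
  compatibility of \<open>\<nabla>\<close> gives \<open>\<langle>D f \<circ> e\<^sub>1, e\<^sub>2\<rangle> = -\<Phi>(e\<^sub>1,e\<^sub>2)f\<close>. So both conditions say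
  exactly that \<open>\<Phi>\<close> vanishes.\<close>

definition anchor_bracket_defect ::
  "('e \<Rightarrow> ('m \<Rightarrow> real) \<Rightarrow> ('m \<Rightarrow> real)) \<Rightarrow> ('e \<Rightarrow> 'e \<Rightarrow> 'e) \<Rightarrow> 'e \<Rightarrow> 'e \<Rightarrow>
   ('m \<Rightarrow> real) \<Rightarrow> ('m \<Rightarrow> real)" where
  "anchor_bracket_defect anc circ e1 e2 f =
     (\<lambda>x. anc e1 (anc e2 f) x - anc e2 (anc e1 f) x - anc (circ e1 e2) f x)"

locale anchored_bundle =
  fixes Cinf :: "('m \<Rightarrow> real) set"
    and sm :: "('m \<Rightarrow> real) \<Rightarrow> 'e::real_vector \<Rightarrow> 'e"
    and g :: "'e \<Rightarrow> 'e \<Rightarrow> ('m \<Rightarrow> real)"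
    and anc :: "'e \<Rightarrow> ('m \<Rightarrow> real) \<Rightarrow> ('m \<Rightarrow> real)"
  assumes metric_bundle: "anchored_metric_bundle Cinf sm g anc"
begin

lemma const_in_Cinf: "(\<lambda>x. c) \<in> Cinf"
  using metric_bundle unfolding anchored_metric_bundle_def fun_algebra_def by auto

lemma diff_in_Cinf:
  assumes "f \<in> Cinf" "h \<in> Cinf"
  shows "(\<lambda>x. f x - h x) \<in> Cinf"
proof -
  have "(\<lambda>x. - h x) \<in> Cinf" "\<forall>f\<in>Cinf. \<forall>h\<in>Cinf. (\<lambda>x. f x + h x) \<in> Cinf"
    using metric_bundle assms(2) unfolding anchored_metric_bundle_def fun_algebra_def by auto
  then show ?thesis
    using assms(1) by force
qed

lemma g_in_Cinf: "g e h \<in> Cinf"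
  using metric_bundle unfolding anchored_metric_bundle_def by auto

lemma anc_in_Cinf: "f \<in> Cinf \<Longrightarrow> anc e f \<in> Cinf"
  using metric_bundle unfolding anchored_metric_bundle_def by auto

lemma anchor_bracket_defect_in_Cinf: "f \<in> Cinf \<Longrightarrow> anchor_bracket_defect anc circ e1 e2 f \<in> Cinf"
  unfolding anchor_bracket_defect_def by (intro diff_in_Cinf anc_in_Cinf)

lemma sm_const: "sm (\<lambda>x. c) e = c *\<^sub>R e"
  using metric_bundle unfolding anchored_metric_bundle_def by auto

lemma sm_add_left: "f \<in> Cinf \<Longrightarrow> h \<in> Cinf \<Longrightarrow> sm (\<lambda>x. f x + h x) e = sm f e + sm h e"
  using metric_bundle unfolding anchored_metric_bundle_def by auto

lemma sm_add_right: "f \<in> Cinf \<Longrightarrow> sm f (e + e') = sm f e + sm f e'"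
  using metric_bundle unfolding anchored_metric_bundle_def by auto

lemma sm_diff_left:
  assumes "f \<in> Cinf" "h \<in> Cinf"
  shows "sm (\<lambda>x. f x - h x) e = sm f e - sm h e"
  using sm_add_left[OF diff_in_Cinf[OF assms] assms(2), of e] by (simp add: eq_diff_eq)

lemma sm_diff_right: "f \<in> Cinf \<Longrightarrow> sm f (e - e') = sm f e - sm f e'"
  using sm_add_right[of f "e - e'" e'] by (simp add: eq_diff_eq)

lemma g_commute: "g e h = g h e"
  using metric_bundle unfolding anchored_metric_bundle_def by auto

lemma g_add: "g (e + e') h x = g e h x + g e' h x"
proof -
  have "\<forall>e e' h. g (e + e') h = (\<lambda>x. g e h x + g e' h x)"
    using metric_bundle unfolding anchored_metric_bundle_def by (elim conjE)
  then show ?thesis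
    by simp
qed

lemma g_sm: "f \<in> Cinf \<Longrightarrow> g (sm f e) h x = f x * g e h x"
proof -
  have "\<forall>f\<in>Cinf. \<forall>e h. g (sm f e) h = (\<lambda>x. f x * g e h x)"
    using metric_bundle unfolding anchored_metric_bundle_def by (elim conjE)
  then show "f \<in> Cinf \<Longrightarrow> g (sm f e) h x = f x * g e h x"
    by simp
qed

lemma g_nondegenerate:
  assumes "\<And>h x. g e h x = 0"
  shows "e = 0"
proof -
  have "\<forall>e. (\<forall>h. g e h = (\<lambda>x. 0)) \<longrightarrow> e = 0"
    using metric_bundle unfolding anchored_metric_bundle_def by (elim conjE)
  then show ?thesis
    using assms by blast
qed

lemma g_zero: "g 0 h x = 0"
  using g_add[of 0 0] by simp

lemma g_diff: "g (e - e') h x = g e h x - g e' h x"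
  by (metis g_add add_diff_cancel_right' diff_add_cancel)

lemma g_scaleR: "g (c *\<^sub>R e) h x = c * g e h x"
  using g_sm[OF const_in_Cinf] by (simp add: sm_const)

lemma annihilating_coefficient_vanishes_on_metric:
  assumes "q \<in> Cinf" and "\<And>e. sm q e = 0"
  shows "q x * g a b x = 0"
  using g_sm[OF assms(1), of a b x] assms(2) by (simp add: g_zero)

end

locale connected_bundle = anchored_bundle +
  fixes nab :: "'e::real_vector \<Rightarrow> 'e \<Rightarrow> 'e"
  assumes connection: "metric_connection Cinf sm g anc nab"
begin

lemma nab_add_right: "nab e1 (e2 + e2') = nab e1 e2 + nab e1 e2'"
  using connection unfolding metric_connection_def by blast

lemma nab_sm_right: "f \<in> Cinf \<Longrightarrow> nab e1 (sm f e2) = sm (anc e1 f) e2 + sm f (nab e1 e2)"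
  using connection unfolding metric_connection_def by blast

lemma anc_g: "anc e1 (g e2 e3) x = g (nab e1 e2) e3 x + g e2 (nab e1 e3) x"
  using connection unfolding metric_connection_def by simp

lemma courant_curvature_add:
  "courant_curvature nab circ e1 e2 (e + e') =
     courant_curvature nab circ e1 e2 e + courant_curvature nab circ e1 e2 e'"
  unfolding courant_curvature_def by (simp add: nab_add_right algebra_simps)

lemma courant_curvature_sm:
  assumes f: "f \<in> Cinf"
  shows "courant_curvature nab circ e1 e2 (sm f e) =
           sm f (courant_curvature nab circ e1 e2 e) + sm (anchor_bracket_defect anc circ e1 e2 f) e"
proof -
  have af: "anc e1 f \<in> Cinf" "anc e2 f \<in> Cinf"
    using f by (simp_all add: anc_in_Cinf)
  have "nab e1 (nab e2 (sm f e)) = sm (anc e1 (anc e2 f)) e + sm (anc e2 f) (nab e1 e)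
      + sm (anc e1 f) (nab e2 e) + sm f (nab e1 (nab e2 e))"
   and "nab e2 (nab e1 (sm f e)) = sm (anc e2 (anc e1 f)) e + sm (anc e1 f) (nab e2 e)
      + sm (anc e2 f) (nab e1 e) + sm f (nab e2 (nab e1 e))"
   and "nab (circ e1 e2) (sm f e) = sm (anc (circ e1 e2) f) e + sm f (nab (circ e1 e2) e)"
   and "sm (anchor_bracket_defect anc circ e1 e2 f) e =
      sm (anc e1 (anc e2 f)) e - sm (anc e2 (anc e1 f)) e - sm (anc (circ e1 e2) f) e"
    using f af
    by (simp_all add: nab_sm_right nab_add_right add.assoc anchor_bracket_defect_def
        sm_diff_left diff_in_Cinf anc_in_Cinf)
  then show ?thesis
    unfolding courant_curvature_def by (simp add: sm_diff_right[OF f] sm_add_right[OF f] algebra_simps)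
qed

lemma Cinf_linear_courant_curvature_iff:
  "Cinf_linear Cinf sm (courant_curvature nab circ e1 e2) \<longleftrightarrow>
     (\<forall>f\<in>Cinf. \<forall>e. sm (anchor_bracket_defect anc circ e1 e2 f) e = 0)"
  unfolding Cinf_linear_def by (auto simp: courant_curvature_add courant_curvature_sm)

end

locale nabla_bracket_bundle = connected_bundle +
  fixes D :: "('m \<Rightarrow> real) \<Rightarrow> 'e::real_vector"
    and circ :: "'e \<Rightarrow> 'e \<Rightarrow> 'e"
  assumes D: "is_D Cinf g anc D"
    and bracket: "is_nabla_bracket g nab circ"
begin

lemma g_D: "f \<in> Cinf \<Longrightarrow> g (D f) e = anc e f"
  using D unfolding is_D_def by blast

lemma g_circ: "g (circ e1 e2) e3 x = g (nab e1 e2) e3 x - g (nab e2 e1) e3 x + g (nab e3 e1) e2 x"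
  using bracket unfolding is_nabla_bracket_def by simp

lemma metric_algebroid: "metric_algebroid Cinf g circ anc D"
  unfolding metric_algebroid_def
proof (intro conjI allI)
  fix e h1 h2
  show "anc e (g h1 h2) = (\<lambda>x. g (circ e h1) h2 x + g h1 (circ e h2) x)"
  proof
    fix x
    have "g h1 (circ e h2) x = g (circ e h2) h1 x"
      "g (nab h1 e) h2 x = g h2 (nab h1 e) x" "g (nab h2 e) h1 x = g h1 (nab h2 e) x"
      "g (nab e h2) h1 x = g h1 (nab e h2) x"
      by (metis g_commute)+
    then show "anc e (g h1 h2) x = g (circ e h1) h2 x + g h1 (circ e h2) x"
      using g_circ[of e h1 h2 x] g_circ[of e h2 h1 x] anc_g[of e h1 h2 x] by linarith
  qed
next
  fix e
  have "g (circ e e - (1/2) *\<^sub>R D (g e e)) h x = 0" for h x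
  proof -
    have "g (circ e e) h x = g (nab h e) e x"
      using g_circ[of e e h x] by simp
    moreover have "g (D (g e e)) h x = 2 * g (nab h e) e x"
      using anc_g[of h e e x] g_D[OF g_in_Cinf] by (metis g_commute mult_2)
    ultimately show ?thesis
      by (simp add: g_diff g_scaleR)
  qed
  then show "circ e e = (1/2) *\<^sub>R D (g e e)"
    using g_nondegenerate by (metis eq_iff_diff_eq_0)
qed

lemma pre_courant_algebroid_iff_anchor_bracket_defect_zero:
  "pre_courant_algebroid Cinf g circ anc D \<longleftrightarrow>
     (\<forall>e1 e2. \<forall>f\<in>Cinf. anchor_bracket_defect anc circ e1 e2 f = (\<lambda>x. 0))"
  unfolding pre_courant_algebroid_def anchor_bracket_defect_def
  using metric_algebroid by (auto simp: fun_eq_iff)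

lemma g_D_circ:
  assumes f: "f \<in> Cinf"
  shows "g (circ (D f) e) h x = - anchor_bracket_defect anc circ e h f x"
proof -
  have "anc e (anc h f) x = g (nab e (D f)) h x + anc (nab e h) f x"
    and "anc h (anc e f) x = g (nab h (D f)) e x + anc (nab h e) f x"
    using anc_g[of e "D f" h x] anc_g[of h "D f" e x] g_D[OF f] by simp_all
  moreover have "anc (circ e h) f x = anc (nab e h) f x - anc (nab h e) f x + g (nab (D f) e) h x"
    using g_circ[of e h "D f" x] g_D[OF f] g_commute by metis
  ultimately show ?thesis
    unfolding anchor_bracket_defect_def using g_circ[of "D f" e h x] by simp
qed

lemma D_circ_zero_iff:
  assumes "f \<in> Cinf"
  shows "(\<forall>e. circ (D f) e = 0) \<longleftrightarrow> (\<forall>e h. anchor_bracket_defect anc circ e h f = (\<lambda>x. 0))"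
  using g_D_circ[OF assms] g_nondegenerate g_zero by (auto simp: fun_eq_iff)

text \<open>Pair \<open>q \<cdot> (D f \<circ> e\<^sub>1) = 0\<close> with \<open>e\<^sub>2\<close>: as \<open>\<langle>D f \<circ> e\<^sub>1, e\<^sub>2\<rangle> = -q\<close>, this gives \<open>q\<^sup>2 = 0\<close>.\<close>

lemma anchor_bracket_defect_zero_if_annihilating:
  assumes f: "f \<in> Cinf" and "\<And>e. sm (anchor_bracket_defect anc circ e1 e2 f) e = 0"
  shows "anchor_bracket_defect anc circ e1 e2 f = (\<lambda>x. 0)"
proof
  fix x
  let ?q = "anchor_bracket_defect anc circ e1 e2 f x"
  have "?q * g (circ (D f) e1) e2 x = 0"
    using annihilating_coefficient_vanishes_on_metric anchor_bracket_defect_in_Cinf f assms(2) .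
  then show "?q = 0"
    using g_D_circ[OF f] by simp
qed

end

theorem proposition3p8:
  fixes Cinf :: "('m \<Rightarrow> real) set"
    and sm :: "('m \<Rightarrow> real) \<Rightarrow> 'e::real_vector \<Rightarrow> 'e"
    and g :: "'e \<Rightarrow> 'e \<Rightarrow> ('m \<Rightarrow> real)"
    and anc :: "'e \<Rightarrow> ('m \<Rightarrow> real) \<Rightarrow> ('m \<Rightarrow> real)"
    and nab :: "'e \<Rightarrow> 'e \<Rightarrow> 'e"
    and D :: "('m \<Rightarrow> real) \<Rightarrow> 'e"
    and circ :: "'e \<Rightarrow> 'e \<Rightarrow> 'e"
  assumes "anchored_metric_bundle Cinf sm g anc"
    and "metric_connection Cinf sm g anc nab"
    and "is_D Cinf g anc D"
    and "is_nabla_bracket g nab circ"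
  shows "(pre_courant_algebroid Cinf g circ anc D \<longleftrightarrow>
            (\<forall>e1 e2. Cinf_linear Cinf sm (courant_curvature nab circ e1 e2)))
       \<and> (pre_courant_algebroid Cinf g circ anc D \<longleftrightarrow>
            (\<forall>e. \<forall>f\<in>Cinf. circ (D f) e = 0))"
proof -
  interpret nabla_bracket_bundle Cinf sm g anc nab D circ
    using assms by unfold_locales
  let ?defect_zero = "\<forall>e1 e2. \<forall>f\<in>Cinf. anchor_bracket_defect anc circ e1 e2 f = (\<lambda>x. 0)"
  have "(\<forall>e1 e2. Cinf_linear Cinf sm (courant_curvature nab circ e1 e2)) \<longleftrightarrow> ?defect_zero"
    using anchor_bracket_defect_zero_if_annihilating
    by (auto simp: Cinf_linear_courant_curvature_iff sm_const)
  moreover have "(\<forall>e. \<forall>f\<in>Cinf. circ (D f) e = 0) \<longleftrightarrow> ?defect_zero"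
    using D_circ_zero_iff by blast
  ultimately show ?thesis
    using pre_courant_algebroid_iff_anchor_bracket_defect_zero by blast
qed

end
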